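(* For all $(t,z,h)\in\mathcal{O}$, $0\le\widehat J(t,z,h)\le\frac{Iz}{r}\big(1-e^{-r(T-t)}\big)$.
   Context: Fix constants $T>0$, $r>0$, $\mu\in\mathbb{R}$, $\sigma>0$, $\rho>0$, $m^0\ge 0$, $m^1\ge 0$, $\kappa>0$, $\delta>0$, $\alpha\in(0,1)$, $I>0$ and a number $f(I)>0$. Write $\mathbb{R}_+=(0,\infty)$, $\mathcal{O}=[0,T]\times\mathbb{R}_+^2$, $\theta=(\mu-r)/\sigma$. Let $(\Omega,\mathcal{F},\mathbb{F},\mathbb{P})$ be a complete filtered probability space satisfying the usual conditions, carrying a standard $\mathbb{F}$-Brownian motion $B$. Let $\widehat u(z,h)=(1-\alpha)(z/\alpha)^{\alpha/(\alpha-1)}h$. For $(t,z,h)\in\mathcal{O}$ and $s\in[t,T]$ let $H^2_s=he^{-\delta(s-t)}+\frac{f(I)}{\delta}(1-e^{-\delta(s-t)})$, $M^{H^2}_s=m^0+m^1(H^2_s)^{-\kappa}$, and let $Z^2$ solve $dZ^2_s=(\rho-r+M^{H^2}_s)Z^2_s\,ds-\theta Z^2_s\,dB_s$, $Z^2_t=z$. Define $W(t,z,h)=\mathbb{E}\big[\int_t^T e^{-\int_t^s(\rho+M^{H^2}_u)du}\,\widehat u(Z^2_s,H^2_s)\,ds\big]$; subscripts denote partial derivatives. For $z,h>0$ and $s\ge0$ let $H^1_s=he^{-\delta s}$, $M^{H^1}_s=m^0+m^1(H^1_s)^{-\kappa}$ and $Z^1_s=z\exp\big(-(r+\tfrac12\theta^2)s-\theta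 B_s+\int_0^s(\rho+M^{H^1}_u)du\big)$, with $\mathbb{E}_{z,h}$ the corresponding expectation. For $(t,z,h)\in\mathcal{O}$, $\widehat J(t,z,h)=\sup_{0\le\tau\le T-t}\mathbb{E}_{z,h}\Big[\int_0^\tau\Big(Iz\,e^{-rs-\theta B_s-\frac12\theta^2 s}-e^{-\int_0^s(\rho+M^{H^1}_u)du}f(I)W_h(t+s,Z^1_s,H^1_s)\Big)ds\Big]$ over $\mathbb{F}$-stopping times with values in $[0,T-t]$. *)

theory Defs
  imports "HOL-Probability.Probability"
begin

text \<open>Time index is real; only times t \<ge> 0 are relevant.  A filtration on [0,inf)
  extends to all reals by F t = F 0 for t < 0, so this is no restriction.\<close>

definition usual_filtered_prob_space :: "'a measure \<Rightarrow> (real \<Rightarrow> 'a measure) \<Rightarrow> bool" where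
  "usual_filtered_prob_space M F \<longleftrightarrow>
     prob_space M \<and>
     (\<forall>A N. N \<in> null_sets M \<and> A \<subseteq> N \<longrightarrow> A \<in> sets M) \<and>
     filtration (space M) F \<and>
     (\<forall>t. sets (F t) \<subseteq> sets M) \<and>
     (\<forall>t. null_sets M \<subseteq> sets (F t)) \<and>
     (\<forall>t. sets (F t) = (\<Inter>u\<in>{t<..}. sets (F u)))"

definition F_brownian_motion :: "'a measure \<Rightarrow> (real \<Rightarrow> 'a measure) \<Rightarrow> (real \<Rightarrow> 'a \<Rightarrow> real) \<Rightarrow> bool" where
  "F_brownian_motion M F B \<longleftrightarrow>
     (\<forall>t\<ge>0. B t \<in> borel_measurable (F t)) \<and>
     (\<forall>\<omega>\<in>space M. B 0 \<omega> = 0 \<and> continuous_on {0..} (\<lambda>t. B t \<omega>)) \<and>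
     (\<forall>s t. 0 \<le> s \<and> s < t \<longrightarrow>
        distributed M lborel (\<lambda>\<omega>. B t \<omega> - B s \<omega>) (\<lambda>x. ennreal (normal_density 0 (sqrt (t - s)) x)) \<and>
        (\<forall>A\<in>sets (F s). \<forall>C\<in>sets borel.
           measure M (A \<inter> ((\<lambda>\<omega>. B t \<omega> - B s \<omega>) -` C \<inter> space M))
             = measure M A * measure M ((\<lambda>\<omega>. B t \<omega> - B s \<omega>) -` C \<inter> space M)))"

definition theta :: "real \<Rightarrow> real \<Rightarrow> real \<Rightarrow> real" where
  "theta \<mu> r \<sigma> = (\<mu> - r) / \<sigma>"

definition uhat :: "real \<Rightarrow> real \<Rightarrow> real \<Rightarrow> real" where
  "uhat \<alpha> z h = (1 - \<alpha>) * (z / \<alpha>) powr (\<alpha> / (\<alpha> - 1)) * h"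

definition MH :: "real \<Rightarrow> real \<Rightarrow> real \<Rightarrow> real \<Rightarrow> real" where
  "MH m0 m1 \<kappa> x = m0 + m1 * x powr (- \<kappa>)"

definition H2 :: "real \<Rightarrow> real \<Rightarrow> real \<Rightarrow> real \<Rightarrow> real \<Rightarrow> real" where
  "H2 \<delta> fI t h s = h * exp (- \<delta> * (s - t)) + fI / \<delta> * (1 - exp (- \<delta> * (s - t)))"

text \<open>Z^2_s: the (unique strong) solution of the linear SDE
  dZ = (rho - r + M^{H^2}) Z ds - theta Z dB, Z_t = z, written in closed form.\<close>
definition Z2 :: "(real \<Rightarrow> 'a \<Rightarrow> real) \<Rightarrow> real \<Rightarrow> real \<Rightarrow> real \<Rightarrow> real \<Rightarrow> real \<Rightarrow> real \<Rightarrow> real \<Rightarrow> real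
                  \<Rightarrow> real \<Rightarrow> real \<Rightarrow> real \<Rightarrow> real \<Rightarrow> 'a \<Rightarrow> real" where
  "Z2 B \<theta> r \<rho> m0 m1 \<kappa> \<delta> fI t z h s \<omega> =
     z * exp ((\<integral>u\<in>{t..s}. (\<rho> - r + MH m0 m1 \<kappa> (H2 \<delta> fI t h u)) \<partial>lborel)
              - \<theta> * (B s \<omega> - B t \<omega>) - \<theta>\<^sup>2 / 2 * (s - t))"

definition Wfun :: "'a measure \<Rightarrow> (real \<Rightarrow> 'a \<Rightarrow> real) \<Rightarrow> real \<Rightarrow> real \<Rightarrow> real \<Rightarrow> real \<Rightarrow> real \<Rightarrow> real
                   \<Rightarrow> real \<Rightarrow> real \<Rightarrow> real \<Rightarrow> real \<Rightarrow> real \<Rightarrow> real \<Rightarrow> real \<Rightarrow> real" where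
  "Wfun M B T \<theta> r \<rho> m0 m1 \<kappa> \<delta> \<alpha> fI t z h =
     (\<integral>\<omega>. (\<integral>s\<in>{t..T}.
        exp (- (\<integral>u\<in>{t..s}. (\<rho> + MH m0 m1 \<kappa> (H2 \<delta> fI t h u)) \<partial>lborel))
        * uhat \<alpha> (Z2 B \<theta> r \<rho> m0 m1 \<kappa> \<delta> fI t z h s \<omega>) (H2 \<delta> fI t h s) \<partial>lborel) \<partial>M)"

definition H1 :: "real \<Rightarrow> real \<Rightarrow> real \<Rightarrow> real" where
  "H1 \<delta> h s = h * exp (- \<delta> * s)"

definition Z1 :: "(real \<Rightarrow> 'a \<Rightarrow> real) \<Rightarrow> real \<Rightarrow> real \<Rightarrow> real \<Rightarrow> real \<Rightarrow> real \<Rightarrow> real \<Rightarrow> real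
                  \<Rightarrow> real \<Rightarrow> real \<Rightarrow> real \<Rightarrow> 'a \<Rightarrow> real" where
  "Z1 B \<theta> r \<rho> m0 m1 \<kappa> \<delta> z h s \<omega> =
     z * exp (- (r + \<theta>\<^sup>2 / 2) * s - \<theta> * B s \<omega>
              + (\<integral>u\<in>{0..s}. (\<rho> + MH m0 m1 \<kappa> (H1 \<delta> h u)) \<partial>lborel))"

definition Jhat :: "'a measure \<Rightarrow> (real \<Rightarrow> 'a measure) \<Rightarrow> (real \<Rightarrow> 'a \<Rightarrow> real)
     \<Rightarrow> real \<Rightarrow> real \<Rightarrow> real \<Rightarrow> real \<Rightarrow> real \<Rightarrow> real \<Rightarrow> real \<Rightarrow> real \<Rightarrow> real \<Rightarrow> real \<Rightarrow> real \<Rightarrow> real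
     \<Rightarrow> real \<Rightarrow> real \<Rightarrow> real \<Rightarrow> real" where
  "Jhat M F B T r \<mu> \<sigma> \<rho> m0 m1 \<kappa> \<delta> \<alpha> I fI t z h =
     (let \<theta> = theta \<mu> r \<sigma> in
      SUP \<tau> \<in> {\<tau>. stopping_time F \<tau> \<and> (\<forall>\<omega>\<in>space M. 0 \<le> \<tau> \<omega> \<and> \<tau> \<omega> \<le> T - t)}.
        (\<integral>\<omega>. (\<integral>s\<in>{0..\<tau> \<omega>}.
            (I * z * exp (- r * s - \<theta> * B s \<omega> - \<theta>\<^sup>2 / 2 * s)
             - exp (- (\<integral>u\<in>{0..s}. (\<rho> + MH m0 m1 \<kappa> (H1 \<delta> h u)) \<partial>lborel)) * fI
               * deriv (\<lambda>h'. Wfun M B T \<theta> r \<rho> m0 m1 \<kappa> \<delta> \<alpha> fI (t + s)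
                                   (Z1 B \<theta> r \<rho> m0 m1 \<kappa> \<delta> z h s \<omega>) h')
                       (H1 \<delta> h s)) \<partial>lborel) \<partial>M))"

end

theory Submission
  imports Defs
begin

text \<open>Stopping at once shows \<open>J \<ge> 0\<close>. For the upper bound, the running cost
  \<open>f(I) exp(-\<integral>(\<rho> + M)) W\<^sub>h\<close> is nonnegative, so dropping it and integrating the reward up to
  \<open>T - t\<close> can only increase the payoff of a stopping time. The reward is \<open>I z exp(-r s)\<close> times the
  exponential martingale \<open>exp(-\<theta> B\<^sub>s - \<theta>\<^sup>2 s / 2)\<close>, which has mean one, so by Tonelli its
  expected integral is \<open>I z (1 - exp(-r (T - t))) / r\<close>.

  The sign of \<open>W\<^sub>h\<close> comes from the same computation: \<open>Z\<^sup>2\<close> is an explicit exponential of the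
  increment of \<open>B\<close>, so Tonelli and the Gaussian moment generating function turn \<open>W(t, z, h)\<close>
  into a deterministic integral \<open>\<integral>\<^sub>t\<^sup>T K(h, s) ds\<close>. It may be differentiated under the
  integral sign, and \<open>\<partial>\<^sub>h K \<ge> 0\<close> because \<open>h \<mapsto> H\<^sup>2\<close> is increasing, the mortality
  \<open>m\<^sup>0 + m\<^sup>1 H\<^sup>-\<^sup>\<kappa>\<close> is decreasing in \<open>H\<close>, and the exponent \<open>\<alpha> / (\<alpha> - 1)\<close> of
  \<open>uhat\<close> is negative.\<close>

section \<open>Gaussian increments\<close>

lemma floor_mult_divide_bounds:
  fixes x N :: real
  assumes "0 < N"
  shows "x - 1 / N \<le> \<lfloor>x * N\<rfloor> / N" and "\<lfloor>x * N\<rfloor> / N \<le> x"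
proof -
  have floor: "\<lfloor>x * N\<rfloor> \<le> x * N" "x * N - 1 \<le> \<lfloor>x * N\<rfloor>" by linarith+
  have "x - 1 / N = (x * N - 1) / N" using assms by (simp add: field_simps)
  then show "x - 1 / N \<le> \<lfloor>x * N\<rfloor> / N"
    using floor assms by (simp add: divide_right_mono)
  show "\<lfloor>x * N\<rfloor> / N \<le> x" using floor assms by (simp add: field_simps)
qed

lemma normal_density_mult_exp:
  assumes "0 < \<sigma>"
  shows "normal_density 0 \<sigma> x * exp (c * x) = exp (c\<^sup>2 * \<sigma>\<^sup>2 / 2) * normal_density (c * \<sigma>\<^sup>2) \<sigma> x"
proof -
  have "- (x - 0)\<^sup>2 / (2 * \<sigma>\<^sup>2) + c * x = c\<^sup>2 * \<sigma>\<^sup>2 / 2 + - (x - c * \<sigma>\<^sup>2)\<^sup>2 / (2 * \<sigma>\<^sup>2)"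
    using assms by (simp add: field_simps power2_eq_square)
  then show ?thesis
    unfolding normal_density_def by (simp add: exp_add[symmetric] mult_ac)
qed

lemma nn_integral_normal_density_mult_exp:
  assumes "0 < \<sigma>"
  shows "(\<integral>\<^sup>+x. ennreal (normal_density 0 \<sigma> x) * ennreal (exp (c * x)) \<partial>lborel)
    = ennreal (exp (c\<^sup>2 * \<sigma>\<^sup>2 / 2))"
proof -
  have "(\<integral>\<^sup>+x. ennreal (normal_density 0 \<sigma> x) * ennreal (exp (c * x)) \<partial>lborel)
      = (\<integral>\<^sup>+x. ennreal (exp (c\<^sup>2 * \<sigma>\<^sup>2 / 2)) * ennreal (normal_density (c * \<sigma>\<^sup>2) \<sigma> x) \<partial>lborel)"
    using assms by (intro nn_integral_cong) (simp add: ennreal_mult[symmetric] normal_density_mult_exp)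
  also have "\<dots> = ennreal (exp (c\<^sup>2 * \<sigma>\<^sup>2 / 2)) * (\<integral>\<^sup>+x. ennreal (normal_density (c * \<sigma>\<^sup>2) \<sigma> x) \<partial>lborel)"
    by (rule nn_integral_cmult) simp
  also have "(\<integral>\<^sup>+x. ennreal (normal_density (c * \<sigma>\<^sup>2) \<sigma> x) \<partial>lborel) = 1"
    using assms by (subst nn_integral_eq_integral) auto
  finally show ?thesis by simp
qed

lemma nn_integral_indicator_continuous:
  fixes g :: "real \<Rightarrow> real"
  assumes "continuous_on {a..b} g" and "\<And>s. s \<in> {a..b} \<Longrightarrow> 0 \<le> g s"
  shows "(\<integral>\<^sup>+s. ennreal (indicator {a..b} s * g s) \<partial>lborel) = ennreal (integral {a..b} g)"
proof -
  have "(\<integral>\<^sup>+s. ennreal (indicator {a..b} s * g s) \<partial>lborel)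
      = (\<integral>\<^sup>+s. ennreal (g s) * indicator {a..b} s \<partial>lborel)"
    by (intro nn_integral_cong) (simp add: indicator_def)
  also have "\<dots> = ennreal (integral {a..b} g)"
    using assms by (intro nn_integral_has_integral_lebesgue' integrable_integral integrable_continuous_interval)
  finally show ?thesis .
qed

lemma integral_mult_exp_neg:
  fixes r b c :: real
  assumes "r \<noteq> 0" "0 \<le> b"
  shows "integral {0..b} (\<lambda>s. c * exp (- r * s)) = c / r * (1 - exp (- r * b))"
proof -
  have "((\<lambda>s. c * exp (- r * s)) has_integral (- c / r * exp (- r * b)) - (- c / r * exp (- r * 0))) {0..b}"
    using assms
    by (intro fundamental_theorem_of_calculus)
      (auto intro!: derivative_eq_intros simp: has_real_derivative_iff_has_vector_derivative[symmetric])
  from integral_unique[OF this] show ?thesis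
    using assms by (simp add: field_simps)
qed

locale gaussian_increment_process = prob_space M for M :: "'a measure" +
  fixes B :: "real \<Rightarrow> 'a \<Rightarrow> real"
  assumes borel_measurable_B: "0 \<le> s \<Longrightarrow> B s \<in> borel_measurable M"
    and continuous_paths: "\<omega> \<in> space M \<Longrightarrow> continuous_on {0..} (\<lambda>s. B s \<omega>)"
    and distributed_increment: "0 \<le> u \<Longrightarrow> u < s \<Longrightarrow>
      distributed M lborel (\<lambda>\<omega>. B s \<omega> - B u \<omega>) (\<lambda>x. ennreal (normal_density 0 (sqrt (s - u)) x))"
begin

lemma nn_integral_exp_increment:
  assumes "0 \<le> u" "u \<le> s"
  shows "(\<integral>\<^sup>+\<omega>. ennreal (exp (c * (B s \<omega> - B u \<omega>) - c\<^sup>2 * (s - u) / 2)) \<partial>M) = 1"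
proof (cases "u = s")
  case False
  with assms have "u < s" by simp
  have "(\<integral>\<^sup>+\<omega>. ennreal (exp (c * (B s \<omega> - B u \<omega>) - c\<^sup>2 * (s - u) / 2)) \<partial>M)
      = ennreal (exp (- c\<^sup>2 * (s - u) / 2)) * (\<integral>\<^sup>+\<omega>. ennreal (exp (c * (B s \<omega> - B u \<omega>))) \<partial>M)"
    using borel_measurable_B assms
    by (subst nn_integral_cmult[symmetric])
       (auto intro!: nn_integral_cong simp: ennreal_mult[symmetric] mult_exp_exp)
  also have "(\<integral>\<^sup>+\<omega>. ennreal (exp (c * (B s \<omega> - B u \<omega>))) \<partial>M)
      = (\<integral>\<^sup>+x. ennreal (normal_density 0 (sqrt (s - u)) x) * ennreal (exp (c * x)) \<partial>lborel)"
    by (rule distributed_nn_integral[OF distributed_increment[OF \<open>0 \<le> u\<close> \<open>u < s\<close>], symmetric]) measurable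
  also have "\<dots> = ennreal (exp (c\<^sup>2 * (s - u) / 2))"
    using \<open>u < s\<close> by (simp add: nn_integral_normal_density_mult_exp)
  finally show ?thesis
    by (simp add: ennreal_mult[symmetric] exp_add[symmetric])
qed (simp add: emeasure_space_1)

text \<open>Continuity of the paths makes the process jointly measurable: it is the pointwise limit of
  the processes sampled on the grids \<open>\<nat> / (n + 1)\<close>, which take countably many values in time.\<close>

lemma borel_measurable_paths: "(\<lambda>p. B (max 0 (snd p)) (fst p)) \<in> borel_measurable (M \<Otimes>\<^sub>M lborel)"
proof (rule borel_measurable_LIMSEQ_real)
  define d where "d n s = max 0 (\<lfloor>max 0 s * Suc n\<rfloor> / Suc n)" for n :: nat and s :: real
  show "(\<lambda>n. B (d n (snd p)) (fst p)) \<longlonglongrightarrow> B (max 0 (snd p)) (fst p)"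
    if "p \<in> space (M \<Otimes>\<^sub>M lborel)" for p
  proof -
    let ?s = "max 0 (snd p)"
    have bound: "norm (dist (d n (snd p)) ?s) \<le> 1 / Suc n" for n
      using floor_mult_divide_bounds[of "real (Suc n)" ?s] by (simp add: d_def dist_real_def)
    have "(\<lambda>n. 1 / real (Suc n)) \<longlonglongrightarrow> 0"
      using LIMSEQ_inverse_real_of_nat by (simp add: inverse_eq_divide)
    from Lim_null_comparison[OF always_eventually[OF allI[OF bound]] this]
    have "(\<lambda>n. d n (snd p)) \<longlonglongrightarrow> ?s"
      by (rule tendsto_dist_iff[THEN iffD2])
    moreover have "continuous_on {0..} (\<lambda>s. B s (fst p))"
      using that continuous_paths by (auto simp: space_pair_measure)
    ultimately show ?thesis
      by (intro continuous_on_tendsto_compose[where f="\<lambda>s. B s (fst p)"]) (auto simp: d_def)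
  qed
  show "(\<lambda>p. B (d n (snd p)) (fst p)) \<in> borel_measurable (M \<Otimes>\<^sub>M lborel)" for n
  proof -
    have "(\<lambda>p. B (max 0 (k / Suc n)) (fst p)) \<in> borel_measurable (M \<Otimes>\<^sub>M lborel)" for k :: int
      using borel_measurable_B[of "max 0 (k / Suc n)"] by measurable
    moreover have "(\<lambda>p. \<lfloor>max 0 (snd p) * Suc n\<rfloor>) \<in> M \<Otimes>\<^sub>M lborel \<rightarrow>\<^sub>M count_space UNIV"
      by measurable
    ultimately show ?thesis
      unfolding d_def by (rule measurable_compose_countable[where f="\<lambda>k p. B (max 0 (k / Suc n)) (fst p)"])
  qed
qed

lemma nn_integral_path_integral_exp_increment:
  assumes "0 \<le> a" "a \<le> b" and k: "continuous_on {a..b} k" "\<And>s. s \<in> {a..b} \<Longrightarrow> 0 \<le> k s"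
  shows "(\<integral>\<^sup>+\<omega>. (\<integral>\<^sup>+s. ennreal (indicator {a..b} s * k s * exp (c * (B s \<omega> - B a \<omega>) - c\<^sup>2 * (s - a) / 2)) \<partial>lborel) \<partial>M)
    = ennreal (integral {a..b} k)"
proof -
  interpret pair_sigma_finite M lborel ..
  define f where "f \<omega> s = ennreal (indicator {a..b} s * k s * exp (c * (B (max 0 s) \<omega> - B a \<omega>) - c\<^sup>2 * (s - a) / 2))"
    for \<omega> s
  have [measurable]: "(\<lambda>s. indicator {a..b} s * k s) \<in> borel_measurable borel"
    using borel_measurable_continuous_on_indicator[OF _ k(1)] by simp
  have [measurable]: "B a \<in> borel_measurable M"
    using assms borel_measurable_B by simp
  note borel_measurable_paths[measurable]
  have "(\<integral>\<^sup>+\<omega>. (\<integral>\<^sup>+s. ennreal (indicator {a..b} s * k s * exp (c * (B s \<omega> - B a \<omega>) - c\<^sup>2 * (s - a) / 2)) \<partial>lborel) \<partial>M)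
      = (\<integral>\<^sup>+\<omega>. (\<integral>\<^sup>+s. f \<omega> s \<partial>lborel) \<partial>M)"
    using assms by (intro nn_integral_cong) (auto simp: f_def indicator_def)
  also have "\<dots> = (\<integral>\<^sup>+s. (\<integral>\<^sup>+\<omega>. f \<omega> s \<partial>M) \<partial>lborel)"
    by (rule Fubini'[symmetric]) (simp add: f_def split_beta')
  also have "\<dots> = (\<integral>\<^sup>+s. ennreal (indicator {a..b} s * k s) \<partial>lborel)"
  proof (rule nn_integral_cong)
    fix s :: real
    show "(\<integral>\<^sup>+\<omega>. f \<omega> s \<partial>M) = ennreal (indicator {a..b} s * k s)"
    proof (cases "s \<in> {a..b}")
      case True
      then have [measurable]: "B s \<in> borel_measurable M"
        using assms borel_measurable_B by simp
      have "(\<integral>\<^sup>+\<omega>. f \<omega> s \<partial>M) = ennreal (k s) * (\<integral>\<^sup>+\<omega>. ennreal (exp (c * (B s \<omega> - B a \<omega>) - c\<^sup>2 * (s - a) / 2)) \<partial>M)"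
        using True assms k(2)[OF True]
        by (subst nn_integral_cmult[symmetric]) (auto intro!: nn_integral_cong simp: f_def ennreal_mult)
      then show ?thesis
        using True assms by (simp add: nn_integral_exp_increment)
    qed (simp add: f_def)
  qed
  also have "\<dots> = ennreal (integral {a..b} k)"
    using k by (rule nn_integral_indicator_continuous)
  finally show ?thesis .
qed

lemma borel_measurable_path_integral:
  assumes "0 \<le> a" and k: "continuous_on {a..b} k"
  shows "(\<lambda>\<omega>. \<integral>s\<in>{a..b}. k s * exp (c * (B s \<omega> - B a \<omega>) - c\<^sup>2 * (s - a) / 2) \<partial>lborel) \<in> borel_measurable M"
proof -
  have [measurable]: "(\<lambda>s. indicator {a..b} s * k s) \<in> borel_measurable borel"
    using borel_measurable_continuous_on_indicator[OF _ k] by simp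
  have [measurable]: "B a \<in> borel_measurable M"
    using assms borel_measurable_B by simp
  note borel_measurable_paths[measurable]
  have "(\<lambda>\<omega>. \<integral>s. indicator {a..b} s * k s * exp (c * (B (max 0 s) \<omega> - B a \<omega>) - c\<^sup>2 * (s - a) / 2) \<partial>lborel)
      \<in> borel_measurable M"
    by (rule lborel.borel_measurable_lebesgue_integral) (simp add: split_beta')
  then show ?thesis
    unfolding set_lebesgue_integral_def
    by (rule measurable_cong[THEN iffD1, rotated])
       (use assms in \<open>auto intro!: Bochner_Integration.integral_cong simp: indicator_def\<close>)
qed

lemma has_bochner_integral_path_integral_exp_increment:
  assumes "0 \<le> a" "a \<le> b" and k: "continuous_on {a..b} k" "\<And>s. s \<in> {a..b} \<Longrightarrow> 0 \<le> k s"
  shows "has_bochner_integral M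
    (\<lambda>\<omega>. \<integral>s\<in>{a..b}. k s * exp (c * (B s \<omega> - B a \<omega>) - c\<^sup>2 * (s - a) / 2) \<partial>lborel) (integral {a..b} k)"
proof (rule has_bochner_integral_nn_integral)
  let ?g = "\<lambda>\<omega> s. k s * exp (c * (B s \<omega> - B a \<omega>) - c\<^sup>2 * (s - a) / 2)"
  have g: "(\<integral>s\<in>{a..b}. ?g \<omega> s \<partial>lborel) = integral {a..b} (?g \<omega>)"
    "0 \<le> integral {a..b} (?g \<omega>)"
    "(\<integral>\<^sup>+s. ennreal (indicator {a..b} s * ?g \<omega> s) \<partial>lborel) = ennreal (integral {a..b} (?g \<omega>))"
    if "\<omega> \<in> space M" for \<omega>
  proof -
    have cont: "continuous_on {a..b} (?g \<omega>)"
      using that assms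
      by (intro continuous_intros continuous_on_subset[OF continuous_paths]) auto
    have nonneg: "s \<in> {a..b} \<Longrightarrow> 0 \<le> ?g \<omega> s" for s
      using k(2) by simp
    show "(\<integral>s\<in>{a..b}. ?g \<omega> s \<partial>lborel) = integral {a..b} (?g \<omega>)"
      using cont by (intro set_borel_integral_eq_integral borel_integrable_atLeastAtMost')
    show "0 \<le> integral {a..b} (?g \<omega>)"
      using cont nonneg by (intro integral_nonneg integrable_continuous_interval)
    show "(\<integral>\<^sup>+s. ennreal (indicator {a..b} s * ?g \<omega> s) \<partial>lborel) = ennreal (integral {a..b} (?g \<omega>))"
      using cont nonneg by (rule nn_integral_indicator_continuous)
  qed
  show "0 \<le> integral {a..b} k"
    using k by (intro integral_nonneg integrable_continuous_interval)
  show "AE \<omega> in M. 0 \<le> (\<integral>s\<in>{a..b}. ?g \<omega> s \<partial>lborel)"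
    using g by (intro AE_I2) simp
  have "(\<integral>\<^sup>+\<omega>. ennreal (\<integral>s\<in>{a..b}. ?g \<omega> s \<partial>lborel) \<partial>M)
      = (\<integral>\<^sup>+\<omega>. (\<integral>\<^sup>+s. ennreal (indicator {a..b} s * ?g \<omega> s) \<partial>lborel) \<partial>M)"
    using g by (intro nn_integral_cong) simp
  also have "\<dots> = ennreal (integral {a..b} k)"
    using nn_integral_path_integral_exp_increment[OF assms] by (simp add: mult.assoc)
  finally show "(\<integral>\<^sup>+\<omega>. ennreal (\<integral>s\<in>{a..b}. ?g \<omega> s \<partial>lborel) \<partial>M) = ennreal (integral {a..b} k)" .
  show "(\<lambda>\<omega>. \<integral>s\<in>{a..b}. ?g \<omega> s \<partial>lborel) \<in> borel_measurable M"
    using assms(1,3) by (rule borel_measurable_path_integral)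
qed

lemma has_bochner_integral_discounted_reward:
  assumes "\<And>\<omega>. \<omega> \<in> space M \<Longrightarrow> B 0 \<omega> = 0" and "0 \<le> c" "r \<noteq> 0" "0 \<le> b"
  shows "has_bochner_integral M (\<lambda>\<omega>. \<integral>s\<in>{0..b}. c * exp (- r * s - \<theta> * B s \<omega> - \<theta>\<^sup>2 / 2 * s) \<partial>lborel)
    (c / r * (1 - exp (- r * b)))"
proof -
  have eq: "(\<integral>s\<in>{0..b}. c * exp (- r * s - \<theta> * B s \<omega> - \<theta>\<^sup>2 / 2 * s) \<partial>lborel)
      = (\<integral>s\<in>{0..b}. c * exp (- r * s) * exp ((- \<theta>) * (B s \<omega> - B 0 \<omega>) - (- \<theta>)\<^sup>2 * (s - 0) / 2) \<partial>lborel)"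
    if "\<omega> \<in> space M" for \<omega>
    using assms(1)[OF that] by (intro set_lebesgue_integral_cong) (simp_all add: mult.assoc mult_exp_exp)
  have "has_bochner_integral M
      (\<lambda>\<omega>. \<integral>s\<in>{0..b}. c * exp (- r * s) * exp ((- \<theta>) * (B s \<omega> - B 0 \<omega>) - (- \<theta>)\<^sup>2 * (s - 0) / 2) \<partial>lborel)
      (integral {0..b} (\<lambda>s. c * exp (- r * s)))"
    using assms by (intro has_bochner_integral_path_integral_exp_increment continuous_intros) auto
  from has_bochner_integral_cong[THEN iffD2, OF refl eq integral_mult_exp_neg[OF assms(3,4), symmetric] this]
  show ?thesis .
qed

end

lemma F_brownian_motion_imp_gaussian_increment_process:
  assumes "usual_filtered_prob_space M F" and "F_brownian_motion M F B"
  shows "gaussian_increment_process M B"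
proof -
  have "prob_space M" and filtration: "filtration (space M) F" and "\<And>t. sets (F t) \<subseteq> sets M"
    using assms(1) unfolding usual_filtered_prob_space_def by blast+
  then have subalgebra: "subalgebra M (F t)" for t
    unfolding subalgebra_def using filtration.space_F[OF filtration] by auto
  have "B s \<in> borel_measurable M" if "0 \<le> s" for s
    using assms(2) that unfolding F_brownian_motion_def by (blast intro: measurable_from_subalg[OF subalgebra])
  with assms(2) \<open>prob_space M\<close> show ?thesis
    unfolding F_brownian_motion_def gaussian_increment_process_def gaussian_increment_process_axioms_def
    by simp
qed

section \<open>Integrals depending on a parameter\<close>

lemma continuous_on_slice:
  assumes "continuous_on (U \<times> V) (\<lambda>(x, s). f x s)" and "x \<in> U"
  shows "continuous_on V (f x)"
proof -
  have "continuous_on V (Pair x)" and "Pair x ` V \<subseteq> U \<times> V"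
    using assms(2) by (auto intro: continuous_intros)
  from continuous_on_compose2[OF assms(1) this] show ?thesis
    by simp
qed

lemma interpolation_in_interval:
  fixes a s v :: real
  assumes "a \<le> s" and "v \<in> {0..1}"
  shows "a + v * (s - a) \<in> {a..s}"
  using assms mult_left_le_one_le[of "s - a" v] by auto

lemma integral_atLeastAtMost_rescale:
  fixes g :: "real \<Rightarrow> real"
  assumes "a \<le> s" and "continuous_on {a..s} g"
  shows "integral {a..s} g = integral {0..1} (\<lambda>v. (s - a) * g (a + v * (s - a)))"
proof -
  have "(\<lambda>v. a + v * (s - a)) ` {0..1} \<subseteq> {a..s}"
    using assms(1) interpolation_in_interval by blast
  then have "((\<lambda>v. (s - a) *\<^sub>R g (a + v * (s - a))) has_integral integral {a + 0 * (s - a)..a + 1 * (s - a)} g) {0..1}"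
    using assms by (intro has_integral_substitution[where c = a and d = s]) (auto intro!: derivative_eq_intros)
  from integral_unique[OF this] show ?thesis
    by simp
qed

lemma continuous_on_indefinite_integral_param:
  fixes g :: "'a::topological_space \<Rightarrow> real \<Rightarrow> real"
  assumes g: "continuous_on (U \<times> {a..b}) (\<lambda>(x, u). g x u)"
  shows "continuous_on (U \<times> {a..b}) (\<lambda>(x, s). integral {a..s} (g x))"
proof -
  \<comment> \<open>The substitution \<open>u = a + v (s - a)\<close> moves the variable bound into the integrand.\<close>
  let ?h = "\<lambda>(p, v). (snd p - a) * g (fst p) (a + v * (snd p - a))"
  have shift: "continuous_on ((U \<times> {a..b}) \<times> cbox 0 1) (\<lambda>(p, v). (fst p, a + v * (snd p - a)))"
    by (auto intro!: continuous_intros simp: split_beta)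
  have shift_image: "(\<lambda>(p, v). (fst p, a + v * (snd p - a))) ` ((U \<times> {a..b}) \<times> cbox 0 1) \<subseteq> U \<times> {a..b}"
    using interpolation_in_interval by (fastforce simp: cbox_interval)
  have "continuous_on ((U \<times> {a..b}) \<times> cbox 0 1) (\<lambda>(p, v). g (fst p) (a + v * (snd p - a)))"
    using continuous_on_compose2[OF g shift shift_image] by (simp add: split_beta)
  then have "continuous_on ((U \<times> {a..b}) \<times> cbox 0 1) ?h"
    by (auto intro!: continuous_intros simp: split_beta)
  then have "continuous_on (U \<times> {a..b}) (\<lambda>p. integral (cbox 0 1) (\<lambda>v. ?h (p, v)))"
    by (intro integral_continuous_on_param) simp
  then show ?thesis
  proof (rule continuous_on_eq)
    fix p assume p: "p \<in> U \<times> {a..b}"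
    have "continuous_on {a..snd p} (g (fst p))"
      using p by (intro continuous_on_slice[OF continuous_on_subset[OF g]]) auto
    with p show "integral (cbox 0 1) (\<lambda>v. ?h (p, v)) = (\<lambda>(x, s). integral {a..s} (g x)) p"
      by (auto simp: split_beta integral_atLeastAtMost_rescale)
  qed
qed

section \<open>Monotonicity of \<open>W\<close> in the health variable\<close>

lemma H2_pos:
  assumes "0 < \<delta>" "0 \<le> fI" "0 < x" "a \<le> u"
  shows "0 < H2 \<delta> fI a x u"
proof -
  have "0 \<le> fI / \<delta> * (1 - exp (- \<delta> * (u - a)))"
    using assms by simp
  moreover have "0 < x * exp (- \<delta> * (u - a))"
    using assms by simp
  ultimately show ?thesis
    unfolding H2_def by linarith
qed

lemma H2_has_field_derivative:
  "((\<lambda>x. H2 \<delta> fI a x u) has_field_derivative exp (- \<delta> * (u - a))) (at x within X)"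
  unfolding H2_def by (auto intro!: derivative_eq_intros)

lemma continuous_on_H2 [continuous_intros]:
  "continuous_on S f \<Longrightarrow> continuous_on S g \<Longrightarrow> continuous_on S (\<lambda>p. H2 \<delta> fI a (f p) (g p))"
  unfolding H2_def by (intro continuous_intros)

locale health_model =
  fixes \<delta> fI m0 m1 \<kappa> \<alpha> \<theta> r \<rho> :: real
  assumes \<delta>_pos: "0 < \<delta>" and fI_pos: "0 < fI" and m1_nonneg: "0 \<le> m1" and \<kappa>_pos: "0 < \<kappa>"
    and \<alpha>_pos: "0 < \<alpha>" and \<alpha>_less_1: "\<alpha> < 1"
begin

definition mortality :: "real \<Rightarrow> real \<Rightarrow> real \<Rightarrow> real" where
  "mortality a x u = MH m0 m1 \<kappa> (H2 \<delta> fI a x u)"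

definition mortality_dh :: "real \<Rightarrow> real \<Rightarrow> real \<Rightarrow> real" where
  "mortality_dh a x u = - m1 * \<kappa> * H2 \<delta> fI a x u powr (- \<kappa> - 1) * exp (- \<delta> * (u - a))"

definition cum_mortality :: "real \<Rightarrow> real \<Rightarrow> real \<Rightarrow> real" where
  "cum_mortality a x s = integral {a..s} (mortality a x)"

definition cum_mortality_dh :: "real \<Rightarrow> real \<Rightarrow> real \<Rightarrow> real" where
  "cum_mortality_dh a x s = integral {a..s} (mortality_dh a x)"

lemma health_pos: "0 < x \<Longrightarrow> a \<le> u \<Longrightarrow> 0 < H2 \<delta> fI a x u"
  using H2_pos \<delta>_pos fI_pos by (simp add: less_imp_le)

lemma mortality_has_field_derivative:
  assumes "0 < x" "a \<le> u"
  shows "((\<lambda>x. mortality a x u) has_field_derivative mortality_dh a x u) (at x within X)"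
proof -
  have "0 < H2 \<delta> fI a x u"
    using assms by (rule health_pos)
  then show ?thesis
    unfolding mortality_def mortality_dh_def MH_def
    by (auto intro!: derivative_eq_intros H2_has_field_derivative simp: powr_diff field_simps)
qed

lemma continuous_on_mortality: "continuous_on ({0<..} \<times> {a..b}) (\<lambda>(x, u). mortality a x u)"
  unfolding mortality_def MH_def split_beta
  by (intro continuous_intros) (auto dest: health_pos simp: less_imp_neq[symmetric])

lemma continuous_on_mortality_dh: "continuous_on ({0<..} \<times> {a..b}) (\<lambda>(x, u). mortality_dh a x u)"
  unfolding mortality_dh_def split_beta
  by (intro continuous_intros) (auto dest: health_pos simp: less_imp_neq[symmetric])

lemma cum_mortality_has_field_derivative:
  assumes "0 < x" "a \<le> s"
  shows "((\<lambda>x. cum_mortality a x s) has_field_derivative cum_mortality_dh a x s) (at x)"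
proof -
  have "((\<lambda>x. integral (cbox a s) (mortality a x)) has_field_derivative integral (cbox a s) (mortality_dh a x))
      (at x within {0<..})"
  proof (rule leibniz_rule_field_derivative)
    show "mortality a x' integrable_on cbox a s" if "x' \<in> {0<..}" for x'
      unfolding cbox_interval using that
      by (intro integrable_continuous_interval continuous_on_slice[OF continuous_on_mortality]) auto
  qed (use assms continuous_on_mortality_dh[of a s] mortality_has_field_derivative in auto)
  then show ?thesis
    using assms unfolding cum_mortality_def cum_mortality_dh_def
    by (simp add: at_within_open[of x "{0<..}"])
qed

lemma continuous_on_cum_mortality: "continuous_on ({0<..} \<times> {a..b}) (\<lambda>(x, s). cum_mortality a x s)"
  unfolding cum_mortality_def by (rule continuous_on_indefinite_integral_param[OF continuous_on_mortality])

lemma continuous_on_cum_mortality_dh: "continuous_on ({0<..} \<times> {a..b}) (\<lambda>(x, s). cum_mortality_dh a x s)"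
  unfolding cum_mortality_dh_def by (rule continuous_on_indefinite_integral_param[OF continuous_on_mortality_dh])

lemma cum_mortality_dh_nonpos:
  assumes "0 < x"
  shows "cum_mortality_dh a x s \<le> 0"
proof (cases "a \<le> s")
  case True
  have "mortality_dh a x u \<le> 0" for u
    using m1_nonneg \<kappa>_pos by (simp add: mortality_dh_def mult_le_0_iff)
  moreover have "mortality_dh a x integrable_on {a..s}"
    using assms by (intro integrable_continuous_interval continuous_on_slice[OF continuous_on_mortality_dh]) auto
  ultimately have "cum_mortality_dh a x s \<le> integral {a..s} (\<lambda>_. 0)"
    unfolding cum_mortality_dh_def by (intro integral_le) auto
  then show ?thesis
    by simp
qed (simp add: cum_mortality_dh_def)

lemma set_integral_mortality:
  assumes "0 < x" "a \<le> s"
  shows "(\<integral>u\<in>{a..s}. (c + MH m0 m1 \<kappa> (H2 \<delta> fI a x u)) \<partial>lborel) = c * (s - a) + cum_mortality a x s"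
proof -
  have cont: "continuous_on {a..s} (mortality a x)"
    using assms by (intro continuous_on_slice[OF continuous_on_mortality]) auto
  then have "(\<integral>u\<in>{a..s}. (c + mortality a x u) \<partial>lborel) = integral {a..s} (\<lambda>u. c + mortality a x u)"
    by (intro set_borel_integral_eq_integral borel_integrable_atLeastAtMost' continuous_intros)
  also have "\<dots> = c * (s - a) + cum_mortality a x s"
    using assms cont by (simp add: integral_add integrable_continuous_interval cum_mortality_def mult.commute)
  finally show ?thesis
    by (simp add: mortality_def)
qed

definition uhat_exponent :: real where
  "uhat_exponent = \<alpha> / (\<alpha> - 1)"

definition W_exponent :: "real \<Rightarrow> real \<Rightarrow> real \<Rightarrow> real" where
  "W_exponent a x s = uhat_exponent * ((\<rho> - r - \<theta>\<^sup>2 / 2) * (s - a) + cum_mortality a x s)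
     - (\<rho> * (s - a) + cum_mortality a x s) + (uhat_exponent * \<theta>)\<^sup>2 * (s - a) / 2"

text \<open>With \<open>(t, z, h)\<close> renamed to \<open>(a, y, x)\<close>, \<open>W_kernel y a x s\<close> is the expectation of the
  integrand of \<open>W\<close> at time \<open>s\<close>: the last summand of \<open>W_exponent\<close> comes from the Gaussian moment
  generating function.\<close>

definition W_kernel :: "real \<Rightarrow> real \<Rightarrow> real \<Rightarrow> real \<Rightarrow> real" where
  "W_kernel y a x s = (1 - \<alpha>) * (y / \<alpha>) powr uhat_exponent * exp (W_exponent a x s) * H2 \<delta> fI a x s"

definition W_kernel_dh :: "real \<Rightarrow> real \<Rightarrow> real \<Rightarrow> real \<Rightarrow> real" where
  "W_kernel_dh y a x s = (1 - \<alpha>) * (y / \<alpha>) powr uhat_exponent * exp (W_exponent a x s)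
     * ((uhat_exponent - 1) * cum_mortality_dh a x s * H2 \<delta> fI a x s + exp (- \<delta> * (s - a)))"

lemma uhat_exponent_neg: "uhat_exponent < 0"
  using \<alpha>_pos \<alpha>_less_1 by (simp add: uhat_exponent_def divide_pos_neg)

lemma W_integrand_eq:
  assumes "0 < x" "a \<le> s"
  shows "exp (- (\<integral>u\<in>{a..s}. (\<rho> + MH m0 m1 \<kappa> (H2 \<delta> fI a x u)) \<partial>lborel))
      * uhat \<alpha> (Z2 B \<theta> r \<rho> m0 m1 \<kappa> \<delta> fI a y x s \<omega>) (H2 \<delta> fI a x s)
    = W_kernel y a x s * exp ((- uhat_exponent * \<theta>) * (B s \<omega> - B a \<omega>) - (- uhat_exponent * \<theta>)\<^sup>2 * (s - a) / 2)"
proof -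
  define G where "G = cum_mortality a x s"
  define Q where "Q = (\<rho> - r) * (s - a) + G - \<theta> * (B s \<omega> - B a \<omega>) - \<theta>\<^sup>2 / 2 * (s - a)"
  have "Z2 B \<theta> r \<rho> m0 m1 \<kappa> \<delta> fI a y x s \<omega> / \<alpha> = y / \<alpha> * exp Q"
    using assms by (simp add: Z2_def Q_def G_def set_integral_mortality)
  then have "uhat \<alpha> (Z2 B \<theta> r \<rho> m0 m1 \<kappa> \<delta> fI a y x s \<omega>) (H2 \<delta> fI a x s)
      = (1 - \<alpha>) * (y / \<alpha> * exp Q) powr uhat_exponent * H2 \<delta> fI a x s"
    unfolding uhat_def uhat_exponent_def by (simp only:)
  also have "\<dots> = (1 - \<alpha>) * (y / \<alpha>) powr uhat_exponent * exp (uhat_exponent * Q) * H2 \<delta> fI a x s"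
    by (simp only: powr_mult exp_powr_real) (simp add: mult_ac)
  finally have "exp (- (\<integral>u\<in>{a..s}. (\<rho> + MH m0 m1 \<kappa> (H2 \<delta> fI a x u)) \<partial>lborel))
      * uhat \<alpha> (Z2 B \<theta> r \<rho> m0 m1 \<kappa> \<delta> fI a y x s \<omega>) (H2 \<delta> fI a x s)
    = (1 - \<alpha>) * (y / \<alpha>) powr uhat_exponent * exp (- (\<rho> * (s - a) + G) + uhat_exponent * Q) * H2 \<delta> fI a x s"
    using assms by (simp add: set_integral_mortality G_def mult_exp_exp[symmetric] mult_ac)
  also have "- (\<rho> * (s - a) + G) + uhat_exponent * Q
      = W_exponent a x s + ((- uhat_exponent * \<theta>) * (B s \<omega> - B a \<omega>) - (- uhat_exponent * \<theta>)\<^sup>2 * (s - a) / 2)"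
    by (simp add: W_exponent_def Q_def G_def power2_eq_square field_simps)
  finally show ?thesis
    by (simp add: W_kernel_def exp_add mult_ac)
qed

lemma W_exponent_has_field_derivative:
  assumes "0 < x" "a \<le> s"
  shows "((\<lambda>x. W_exponent a x s) has_field_derivative (uhat_exponent - 1) * cum_mortality_dh a x s) (at x)"
  unfolding W_exponent_def
  by (rule DERIV_cong, (rule derivative_eq_intros cum_mortality_has_field_derivative[OF assms] refl)+)
    (simp add: algebra_simps)

lemma W_kernel_has_field_derivative:
  assumes "0 < x" "a \<le> s"
  shows "((\<lambda>x. W_kernel y a x s) has_field_derivative W_kernel_dh y a x s) (at x)"
  unfolding W_kernel_def
  by (rule DERIV_cong,
      (rule derivative_eq_intros W_exponent_has_field_derivative[OF assms] H2_has_field_derivative refl)+)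
    (simp add: W_kernel_dh_def algebra_simps)

lemma continuous_on_W_kernel: "continuous_on ({0<..} \<times> {a..b}) (\<lambda>(x, s). W_kernel y a x s)"
  using continuous_on_cum_mortality[of a b]
  unfolding W_kernel_def W_exponent_def split_beta
  by (intro continuous_intros) auto

lemma continuous_on_W_kernel_dh: "continuous_on ({0<..} \<times> {a..b}) (\<lambda>(x, s). W_kernel_dh y a x s)"
  using continuous_on_cum_mortality[of a b] continuous_on_cum_mortality_dh[of a b]
  unfolding W_kernel_dh_def W_exponent_def split_beta
  by (intro continuous_intros) auto

lemma W_kernel_nonneg:
  assumes "0 < x" "a \<le> s"
  shows "0 \<le> W_kernel y a x s"
  using assms \<alpha>_less_1 health_pos[OF assms] by (simp add: W_kernel_def)

lemma W_kernel_dh_nonneg: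
  assumes "0 < x" "a \<le> s"
  shows "0 \<le> W_kernel_dh y a x s"
proof -
  have "0 \<le> (uhat_exponent - 1) * cum_mortality_dh a x s"
    using uhat_exponent_neg cum_mortality_dh_nonpos[OF assms(1)] by (simp add: mult_nonpos_nonpos)
  then have "0 \<le> (uhat_exponent - 1) * cum_mortality_dh a x s * H2 \<delta> fI a x s + exp (- \<delta> * (s - a))"
    using health_pos[OF assms] by (simp add: add_nonneg_pos)
  then show ?thesis
    using \<alpha>_less_1 by (simp add: W_kernel_dh_def)
qed

lemma integral_W_kernel_has_field_derivative:
  assumes "0 < x"
  shows "((\<lambda>x. integral {a..b} (W_kernel y a x)) has_field_derivative integral {a..b} (W_kernel_dh y a x)) (at x)"
proof -
  have "((\<lambda>x. integral (cbox a b) (W_kernel y a x)) has_field_derivative integral (cbox a b) (W_kernel_dh y a x))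
      (at x within {0<..})"
  proof (rule leibniz_rule_field_derivative)
    show "W_kernel y a x' integrable_on cbox a b" if "x' \<in> {0<..}" for x'
      unfolding cbox_interval using that
      by (intro integrable_continuous_interval continuous_on_slice[OF continuous_on_W_kernel]) auto
    show "((\<lambda>x. W_kernel y a x t) has_field_derivative W_kernel_dh y a x' t) (at x' within {0<..})"
      if "x' \<in> {0<..}" "t \<in> cbox a b" for x' t
      using that by (auto intro: has_field_derivative_at_within[OF W_kernel_has_field_derivative])
    show "continuous_on ({0<..} \<times> cbox a b) (\<lambda>(x, t). W_kernel_dh y a x t)"
      using continuous_on_W_kernel_dh[of a b y] by (simp add: cbox_interval)
  qed (use assms in auto)
  then show ?thesis
    using assms by (simp add: at_within_open[of x "{0<..}"])
qed

end

locale stochastic_health_model =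
  gaussian_increment_process M B + health_model \<delta> fI m0 m1 \<kappa> \<alpha> \<theta> r \<rho>
  for M :: "'a measure" and B and \<delta> fI m0 m1 \<kappa> \<alpha> \<theta> r \<rho> :: real
begin

lemma Wfun_eq_integral_W_kernel:
  assumes "0 \<le> a" "a \<le> T" "0 < y" "0 < x"
  shows "Wfun M B T \<theta> r \<rho> m0 m1 \<kappa> \<delta> \<alpha> fI a y x = integral {a..T} (W_kernel y a x)"
proof -
  let ?c = "- uhat_exponent * \<theta>"
  have "Wfun M B T \<theta> r \<rho> m0 m1 \<kappa> \<delta> \<alpha> fI a y x
      = (\<integral>\<omega>. (\<integral>s\<in>{a..T}. W_kernel y a x s * exp (?c * (B s \<omega> - B a \<omega>) - ?c\<^sup>2 * (s - a) / 2) \<partial>lborel) \<partial>M)"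
    unfolding Wfun_def using assms(4)
    by (intro Bochner_Integration.integral_cong refl set_lebesgue_integral_cong) (auto simp: W_integrand_eq)
  also have "\<dots> = integral {a..T} (W_kernel y a x)"
    using assms
    by (intro has_bochner_integral_integral_eq has_bochner_integral_path_integral_exp_increment
        continuous_on_slice[OF continuous_on_W_kernel] W_kernel_nonneg) auto
  finally show ?thesis .
qed

lemma Wfun_deriv_nonneg:
  assumes "0 \<le> a" "a \<le> T" "0 < y" "0 < x"
  shows "0 \<le> deriv (Wfun M B T \<theta> r \<rho> m0 m1 \<kappa> \<delta> \<alpha> fI a y) x"
proof -
  have "(Wfun M B T \<theta> r \<rho> m0 m1 \<kappa> \<delta> \<alpha> fI a y has_field_derivative integral {a..T} (W_kernel_dh y a x)) (at x)"
    using assms Wfun_eq_integral_W_kernel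
    by (intro has_field_derivative_transform_within_open[OF integral_W_kernel_has_field_derivative, of _ "{0<..}"])
      auto
  moreover have "0 \<le> integral {a..T} (W_kernel_dh y a x)"
    using assms W_kernel_dh_nonneg
    by (intro integral_nonneg integrable_continuous_interval continuous_on_slice[OF continuous_on_W_kernel_dh]) auto
  ultimately show ?thesis
    by (simp add: DERIV_imp_deriv)
qed

end

section \<open>The optimal stopping problem\<close>

lemma set_integral_diff_le_integral:
  fixes A D :: "real \<Rightarrow> real"
  assumes A: "continuous_on {0..b} A" "\<And>s. s \<in> {0..b} \<Longrightarrow> 0 \<le> A s"
    and D: "\<And>s. s \<in> {0..\<tau>} \<Longrightarrow> 0 \<le> D s" and "0 \<le> \<tau>" "\<tau> \<le> b"
  shows "(\<integral>s\<in>{0..\<tau>}. (A s - D s) \<partial>lborel) \<le> integral {0..b} A"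
proof -
  have A_\<tau>: "continuous_on {0..\<tau>} A"
    using assms by (intro continuous_on_subset[OF A(1)]) auto
  then have A_int: "set_integrable lborel {0..\<tau>} A"
    by (rule borel_integrable_atLeastAtMost')
  have A_eq: "(\<integral>s\<in>{0..\<tau>}. A s \<partial>lborel) = integral {0..\<tau>} A"
    using A_int by (rule set_borel_integral_eq_integral)
  have "(\<integral>s\<in>{0..\<tau>}. (A s - D s) \<partial>lborel) \<le> (\<integral>s\<in>{0..\<tau>}. A s \<partial>lborel)"
  proof (cases "set_integrable lborel {0..\<tau>} (\<lambda>s. A s - D s)")
    case True
    with A_int D show ?thesis
      by (intro set_integral_mono) auto
  next
    case False
    then have "(\<integral>s\<in>{0..\<tau>}. (A s - D s) \<partial>lborel) = 0"
      unfolding set_lebesgue_integral_def set_integrable_def by (rule not_integrable_integral_eq)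
    moreover have "0 \<le> (\<integral>s\<in>{0..\<tau>}. A s \<partial>lborel)"
      unfolding A_eq using A assms A_\<tau> by (intro integral_nonneg integrable_continuous_interval) auto
    ultimately show ?thesis
      by simp
  qed
  also have "\<dots> = integral {0..\<tau>} A"
    by (rule A_eq)
  also have "\<dots> \<le> integral {0..b} A"
    using A A_\<tau> assms by (intro integral_subset_le integrable_continuous_interval) auto
  finally show ?thesis .
qed

lemma (in prob_space) integral_stopped_integral_le:
  fixes A D :: "real \<Rightarrow> 'a \<Rightarrow> real" and \<tau> :: "'a \<Rightarrow> real"
  assumes A: "\<And>\<omega>. \<omega> \<in> space M \<Longrightarrow> continuous_on {0..b} (\<lambda>s. A s \<omega>)"
      "\<And>\<omega> s. \<omega> \<in> space M \<Longrightarrow> s \<in> {0..b} \<Longrightarrow> 0 \<le> A s \<omega>"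
    and D: "\<And>\<omega> s. \<omega> \<in> space M \<Longrightarrow> s \<in> {0..\<tau> \<omega>} \<Longrightarrow> 0 \<le> D s \<omega>"
    and \<tau>: "\<And>\<omega>. \<omega> \<in> space M \<Longrightarrow> 0 \<le> \<tau> \<omega> \<and> \<tau> \<omega> \<le> b"
    and A_int: "has_bochner_integral M (\<lambda>\<omega>. \<integral>s\<in>{0..b}. A s \<omega> \<partial>lborel) v"
  shows "(\<integral>\<omega>. (\<integral>s\<in>{0..\<tau> \<omega>}. (A s \<omega> - D s \<omega>) \<partial>lborel) \<partial>M) \<le> v"
proof -
  have A_eq: "(\<integral>s\<in>{0..b}. A s \<omega> \<partial>lborel) = integral {0..b} (\<lambda>s. A s \<omega>)" if "\<omega> \<in> space M" for \<omega>
    using A(1)[OF that] by (intro set_borel_integral_eq_integral borel_integrable_atLeastAtMost')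
  have pointwise: "(\<integral>s\<in>{0..\<tau> \<omega>}. (A s \<omega> - D s \<omega>) \<partial>lborel) \<le> (\<integral>s\<in>{0..b}. A s \<omega> \<partial>lborel)"
    if "\<omega> \<in> space M" for \<omega>
    unfolding A_eq[OF that] using A D \<tau> that by (intro set_integral_diff_le_integral) auto
  have v: "v = (\<integral>\<omega>. (\<integral>s\<in>{0..b}. A s \<omega> \<partial>lborel) \<partial>M)"
    using A_int by (rule has_bochner_integral_integral_eq[symmetric])
  show ?thesis
  proof (cases "integrable M (\<lambda>\<omega>. \<integral>s\<in>{0..\<tau> \<omega>}. (A s \<omega> - D s \<omega>) \<partial>lborel)")
    case True
    then show ?thesis
      unfolding v using A_int pointwise by (intro integral_mono) (auto simp: has_bochner_integral_iff)
  next
    case False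
    have "0 \<le> v"
      unfolding v using A by (intro integral_nonneg_AE AE_I2) (auto simp: A_eq intro!: integral_nonneg integrable_continuous_interval)
    with False show ?thesis
      by (simp add: not_integrable_integral_eq)
  qed
qed

lemma (in prob_space) stopping_value_bounds:
  fixes A D :: "real \<Rightarrow> 'a \<Rightarrow> real" and S :: "('a \<Rightarrow> real) set"
  assumes A: "\<And>\<omega>. \<omega> \<in> space M \<Longrightarrow> continuous_on {0..b} (\<lambda>s. A s \<omega>)"
      "\<And>\<omega> s. \<omega> \<in> space M \<Longrightarrow> s \<in> {0..b} \<Longrightarrow> 0 \<le> A s \<omega>"
    and D: "\<And>\<omega> s. \<omega> \<in> space M \<Longrightarrow> s \<in> {0..b} \<Longrightarrow> 0 \<le> D s \<omega>"
    and S: "\<And>\<tau> \<omega>. \<tau> \<in> S \<Longrightarrow> \<omega> \<in> space M \<Longrightarrow> 0 \<le> \<tau> \<omega> \<and> \<tau> \<omega> \<le> b" "(\<lambda>_. 0) \<in> S"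
    and A_int: "has_bochner_integral M (\<lambda>\<omega>. \<integral>s\<in>{0..b}. A s \<omega> \<partial>lborel) v"
  shows "0 \<le> (SUP \<tau>\<in>S. \<integral>\<omega>. (\<integral>s\<in>{0..\<tau> \<omega>}. (A s \<omega> - D s \<omega>) \<partial>lborel) \<partial>M)
    \<and> (SUP \<tau>\<in>S. \<integral>\<omega>. (\<integral>s\<in>{0..\<tau> \<omega>}. (A s \<omega> - D s \<omega>) \<partial>lborel) \<partial>M) \<le> v"
proof -
  define payoff where "payoff \<tau> = (\<integral>\<omega>. (\<integral>s\<in>{0..\<tau> \<omega>}. (A s \<omega> - D s \<omega>) \<partial>lborel) \<partial>M)" for \<tau>
  have payoff_le: "payoff \<tau> \<le> v" if "\<tau> \<in> S" for \<tau>
    unfolding payoff_def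
  proof (rule integral_stopped_integral_le[OF A _ _ A_int])
    show "0 \<le> D s \<omega>" if "\<omega> \<in> space M" "s \<in> {0..\<tau> \<omega>}" for \<omega> s
      using S(1)[OF \<open>\<tau> \<in> S\<close> that(1)] that by (intro D) auto
  qed (use S(1)[OF that] in auto)
  have "(\<integral>s\<in>{0..0}. (A s \<omega> - D s \<omega>) \<partial>lborel) = 0" for \<omega>
    unfolding set_lebesgue_integral_def
    by (rule integral_eq_zero_AE) (use AE_lborel_singleton[of 0] in \<open>auto elim: AE_mp\<close>)
  then have "payoff (\<lambda>_. 0) = 0"
    by (simp add: payoff_def)
  moreover have "bdd_above (payoff ` S)"
    using payoff_le by (rule bdd_aboveI2)
  ultimately have "0 \<le> (SUP \<tau>\<in>S. payoff \<tau>)"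
    using S(2) by (metis cSUP_upper2 order_refl)
  moreover have "(SUP \<tau>\<in>S. payoff \<tau>) \<le> v"
    using S(2) payoff_le by (intro cSUP_least) auto
  ultimately show ?thesis
    by (simp add: payoff_def)
qed

theorem proposition4p1:
  fixes M :: "'a measure" and F :: "real \<Rightarrow> 'a measure" and B :: "real \<Rightarrow> 'a \<Rightarrow> real"
    and T r \<mu> \<sigma> \<rho> m0 m1 \<kappa> \<delta> \<alpha> I fI t z h :: real
  assumes "T > 0" and "r > 0" and "\<sigma> > 0" and "\<rho> > 0" and "m0 \<ge> 0" and "m1 \<ge> 0"
    and "\<kappa> > 0" and "\<delta> > 0" and "0 < \<alpha>" and "\<alpha> < 1" and "I > 0" and "fI > 0"
    and "usual_filtered_prob_space M F"
    and "F_brownian_motion M F B"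
    and "0 \<le> t" and "t \<le> T" and "z > 0" and "h > 0"
  shows "0 \<le> Jhat M F B T r \<mu> \<sigma> \<rho> m0 m1 \<kappa> \<delta> \<alpha> I fI t z h
       \<and> Jhat M F B T r \<mu> \<sigma> \<rho> m0 m1 \<kappa> \<delta> \<alpha> I fI t z h
           \<le> I * z / r * (1 - exp (- r * (T - t)))"
proof -
  define \<theta> where "\<theta> = theta \<mu> r \<sigma>"
  interpret gaussian_increment_process M B
    using assms(13,14) by (rule F_brownian_motion_imp_gaussian_increment_process)
  interpret stochastic_health_model M B \<delta> fI m0 m1 \<kappa> \<alpha> \<theta> r \<rho>
    by unfold_locales (use assms in auto)
  define A where "A s \<omega> = I * z * exp (- r * s - \<theta> * B s \<omega> - \<theta>\<^sup>2 / 2 * s)" for s \<omega>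
  define D where "D s \<omega> = exp (- (\<integral>u\<in>{0..s}. (\<rho> + MH m0 m1 \<kappa> (H1 \<delta> h u)) \<partial>lborel)) * fI
    * deriv (Wfun M B T \<theta> r \<rho> m0 m1 \<kappa> \<delta> \<alpha> fI (t + s) (Z1 B \<theta> r \<rho> m0 m1 \<kappa> \<delta> z h s \<omega>)) (H1 \<delta> h s)" for s \<omega>
  define S where "S = {\<tau>. stopping_time F \<tau> \<and> (\<forall>\<omega>\<in>space M. 0 \<le> \<tau> \<omega> \<and> \<tau> \<omega> \<le> T - t)}"
  let ?J = "SUP \<tau>\<in>S. \<integral>\<omega>. (\<integral>s\<in>{0..\<tau> \<omega>}. (A s \<omega> - D s \<omega>) \<partial>lborel) \<partial>M"
  have "Jhat M F B T r \<mu> \<sigma> \<rho> m0 m1 \<kappa> \<delta> \<alpha> I fI t z h = ?J"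
    unfolding Jhat_def Let_def \<theta>_def[symmetric] S_def A_def D_def by simp
  moreover have "0 \<le> ?J \<and> ?J \<le> I * z / r * (1 - exp (- r * (T - t)))"
  proof (rule stopping_value_bounds)
    show "0 \<le> D s \<omega>" if "s \<in> {0..T - t}" for \<omega> s
      using Wfun_deriv_nonneg[of "t + s" T "Z1 B \<theta> r \<rho> m0 m1 \<kappa> \<delta> z h s \<omega>" "H1 \<delta> h s"] assms that
      by (simp add: D_def Z1_def H1_def)
    show "has_bochner_integral M (\<lambda>\<omega>. \<integral>s\<in>{0..T - t}. A s \<omega> \<partial>lborel) (I * z / r * (1 - exp (- r * (T - t))))"
      unfolding A_def using assms
      by (intro has_bochner_integral_discounted_reward) (auto simp: F_brownian_motion_def)
    show "continuous_on {0..T - t} (\<lambda>s. A s \<omega>)" if "\<omega> \<in> space M" for \<omega>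
      unfolding A_def using that by (intro continuous_intros continuous_on_subset[OF continuous_paths]) auto
  qed (use assms in \<open>auto simp: S_def A_def intro: stopping_time_const\<close>)
  ultimately show ?thesis
    by simp
qed

end
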